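(* Let $(M,d)$ be a complete separable geodesic space and $m\in\mathcal P_2(M)$ such that (A1) and (A2) hold. Assume there exist constants $p,r_0>0$ and a function $c:M\to\mathbb R_+$ such that $m(B(x,r))>c(x)r^p$ for all $x\in M$ and all $r\in(0,r_0]$. Assume there exist $\beta,L>0$ such that every loss $\ell_t$ is measurable, geodesically $\beta$-expconcave and $L$-Lipschitz, and that the \textsc{ewb} forecaster with $\beta_t=\beta$ is well defined (normalizing integrals finite and positive, $m_t\in\mathcal P_2(M)$). Let $n\ge 1/r_0$ and suppose $x_n^*\in\arg\min_{x\in M}\sum_{t=1}^n\ell_t(x)$ exists. Then \[R_n\le L+\frac1\beta\ln\frac{1}{c(x_n^* )}+\frac{p\ln n}{\beta}.\]
   Context: A geodesic is a path $\gamma:[0,1]\to M$ with $d(\gamma(s),\gamma(t))=|t-s|\,d(\gamma(0),\gamma(1))$. $f$ is geodesically convex if $t\mapsto f(\gamma(t))$ is convex for every geodesic $\gamma$; geodesically concave if $-f$ is; geodesically $\beta$-expconcave if $e^{-\beta f}$ is geodesically concave. $B(x,r)=\{y:d(x,y)<r\}$. $\mathcal P_2(M)$: Borel probability measures $\mu$ with $\int d^2(x,y)\mu(\mathrm dy)<\infty$ for all $x$; a barycenter of $\mu$ is a minimizer of $x\mapsto\int d^2(x,y)\mu(\mathrm dy)$. (A1): every $\mu\in\mathcal P_2(M)$ has a barycenter. (A2): for every $\mu\in\mathcal P_2(M)$, barycenter $x^*$ of $\mu$ and geodesically convex $f:M\to\mathbb R$ either positive or in $L^1(\mu)$, $f(x^*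 )\le\int f\,\mathrm d\mu$. Online protocol: at round $t$ the player picks $x_t$, then loss $\ell_t:M\to\mathbb R$ is revealed (arbitrary). Regret $R_n=\sum_{t=1}^n\ell_t(x_t)-\min_x\sum_{t=1}^n\ell_t(x)$. \textsc{ewb} forecaster: $m_1=m$, $\mathrm dm_{t+1}=e^{-\beta\ell_t}\mathrm dm_t/\int e^{-\beta\ell_t}\mathrm dm_t$, $x_t$ a barycenter of $m_t$. *)

theory Defs
  imports "HOL-Probability.Probability"
begin

definition geodesic :: "(real \<Rightarrow> 'a::metric_space) \<Rightarrow> bool" where
  "geodesic \<gamma> \<longleftrightarrow>
     (\<forall>s\<in>{0..1}. \<forall>t\<in>{0..1}. dist (\<gamma> s) (\<gamma> t) = \<bar>t - s\<bar> * dist (\<gamma> 0) (\<gamma> 1))"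

definition geodesic_space :: "'a::metric_space itself \<Rightarrow> bool" where
  "geodesic_space _ \<longleftrightarrow> (\<forall>x y::'a. \<exists>\<gamma>. geodesic \<gamma> \<and> \<gamma> 0 = x \<and> \<gamma> 1 = y)"

definition geod_convex :: "('a::metric_space \<Rightarrow> real) \<Rightarrow> bool" where
  "geod_convex f \<longleftrightarrow> (\<forall>\<gamma>. geodesic \<gamma> \<longrightarrow> convex_on {0..1} (\<lambda>t. f (\<gamma> t)))"

definition geod_concave :: "('a::metric_space \<Rightarrow> real) \<Rightarrow> bool" where
  "geod_concave f \<longleftrightarrow> geod_convex (\<lambda>x. - f x)"

definition geod_expconcave :: "real \<Rightarrow> ('a::metric_space \<Rightarrow> real) \<Rightarrow> bool" where
  "geod_expconcave \<beta> f \<longleftrightarrow> geod_concave (\<lambda>x. exp (- \<beta> * f x))"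

definition P2 :: "'a::metric_space measure \<Rightarrow> bool" where
  "P2 \<mu> \<longleftrightarrow> prob_space \<mu> \<and> sets \<mu> = sets borel \<and>
     (\<forall>x. (\<integral>\<^sup>+ y. ennreal ((dist x y)\<^sup>2) \<partial>\<mu>) < \<infinity>)"

definition barycenter :: "'a::metric_space measure \<Rightarrow> 'a \<Rightarrow> bool" where
  "barycenter \<mu> x \<longleftrightarrow>
     (\<forall>z. (\<integral>y. (dist x y)\<^sup>2 \<partial>\<mu>) \<le> (\<integral>y. (dist z y)\<^sup>2 \<partial>\<mu>))"

definition A1 :: "'a::metric_space itself \<Rightarrow> bool" where
  "A1 _ \<longleftrightarrow> (\<forall>\<mu>::'a measure. P2 \<mu> \<longrightarrow> (\<exists>x. barycenter \<mu> x))"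

text \<open>Jensen-type inequality at barycenters; for nonnegative f the integral is the
  (possibly infinite) nonnegative integral.\<close>
definition A2 :: "'a::metric_space itself \<Rightarrow> bool" where
  "A2 _ \<longleftrightarrow> (\<forall>(\<mu>::'a measure) x f. P2 \<mu> \<longrightarrow> barycenter \<mu> x \<longrightarrow> geod_convex f \<longrightarrow>
      ((\<forall>y. f y \<ge> 0) \<longrightarrow> ennreal (f x) \<le> (\<integral>\<^sup>+ y. ennreal (f y) \<partial>\<mu>)) \<and>
      (integrable \<mu> f \<longrightarrow> f x \<le> (\<integral>y. f y \<partial>\<mu>)))"

text \<open>EWB weights: ewb m beta l t = m_t for t >= 1 (the value at 0 is irrelevant);
  m_1 = m, dm_{t+1} = exp(-beta l_t) dm_t / int exp(-beta l_t) dm_t.\<close>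
primrec ewb :: "'a measure \<Rightarrow> real \<Rightarrow> (nat \<Rightarrow> 'a \<Rightarrow> real) \<Rightarrow> nat \<Rightarrow> 'a measure" where
  "ewb m \<beta> l 0 = m"
| "ewb m \<beta> l (Suc t) =
     (if t = 0 then m
      else density (ewb m \<beta> l t)
        (\<lambda>x. ennreal (exp (- \<beta> * l t x) / (\<integral>y. exp (- \<beta> * l t y) \<partial>(ewb m \<beta> l t)))))"

end

theory Submission
  imports Defs
begin

text \<open>Write \<open>Z\<^sub>t\<close> for the normalizer at round \<open>t\<close>. Expconcavity and (A2) give
  \<open>exp (-\<beta> \<ell>\<^sub>t(x\<^sub>t)) \<ge> Z\<^sub>t\<close>, so the cumulative loss of the forecaster is at most
  \<open>-ln (Z\<^sub>1\<cdots>Z\<^sub>n)/\<beta>\<close>. Unrolling the recursion, \<open>m\<^sub>n\<^sub>+\<^sub>1\<close> has density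
  \<open>exp (-\<beta> \<Sum>\<^sub>t \<ell>\<^sub>t)/(Z\<^sub>1\<cdots>Z\<^sub>n)\<close> with respect to \<open>m\<close>; since it is a probability
  measure, integrating only over the ball of radius \<open>1/n\<close> around \<open>x\<^sup>*\<close>, where the
  cumulative loss exceeds its value at \<open>x\<^sup>*\<close> by at most \<open>L\<close>, bounds \<open>Z\<^sub>1\<cdots>Z\<^sub>n\<close> from
  below by \<open>exp (-\<beta>(\<Sum>\<^sub>t \<ell>\<^sub>t(x\<^sup>*) + L)) c(x\<^sup>*) n\<^sup>-\<^sup>p\<close>.\<close>

definition ewb_normalizer :: "'a measure \<Rightarrow> real \<Rightarrow> (nat \<Rightarrow> 'a \<Rightarrow> real) \<Rightarrow> nat \<Rightarrow> real" where
  "ewb_normalizer m \<beta> l t = (\<integral>y. exp (- \<beta> * l t y) \<partial>(ewb m \<beta> l t))"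

lemma ewb_eq_density:
  assumes "\<And>s. s \<in> {1..t} \<Longrightarrow> l s \<in> borel_measurable m"
    and "\<And>s. s \<in> {1..t} \<Longrightarrow> ewb_normalizer m \<beta> l s > 0"
  shows "ewb m \<beta> l (Suc t) = density m (\<lambda>y. ennreal
           (exp (- \<beta> * (\<Sum>s=1..t. l s y)) / (\<Prod>s=1..t. ewb_normalizer m \<beta> l s)))"
  using assms
proof (induction t)
  case 0
  then show ?case by (simp add: density_1)
next
  case (Suc t)
  define Z where "Z = ewb_normalizer m \<beta> l"
  define g where "g t y = exp (- \<beta> * (\<Sum>s=1..t. l s y)) / (\<Prod>s=1..t. Z s)" for t y
  have Z_pos: "Z s > 0" if "s \<in> {1..Suc t}" for s
    using Suc.prems(2) that by (simp add: Z_def)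
  have g_meas: "(\<lambda>y. ennreal (g t y)) \<in> borel_measurable m"
    using Suc.prems(1) unfolding g_def by measurable
  have l_meas: "(\<lambda>y. ennreal (exp (- \<beta> * l (Suc t) y) / Z (Suc t))) \<in> borel_measurable m"
    using Suc.prems(1)[of "Suc t"] by measurable
  have g_Suc: "g (Suc t) y = g t y * (exp (- \<beta> * l (Suc t) y) / Z (Suc t))" for y
  proof -
    have "exp (- \<beta> * (\<Sum>s=1..Suc t. l s y)) = exp (- \<beta> * (\<Sum>s=1..t. l s y)) * exp (- \<beta> * l (Suc t) y)"
      by (simp add: distrib_left exp_add[symmetric])
    then show ?thesis
      by (simp add: g_def)
  qed
  have "ewb m \<beta> l (Suc (Suc t))
      = density (density m (\<lambda>y. ennreal (g t y))) (\<lambda>y. ennreal (exp (- \<beta> * l (Suc t) y) / Z (Suc t)))"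
    using Suc.IH Suc.prems by (simp add: Z_def g_def ewb_normalizer_def)
  also have "\<dots> = density m (\<lambda>y. ennreal (g t y) * ennreal (exp (- \<beta> * l (Suc t) y) / Z (Suc t)))"
    by (rule density_density_eq[OF g_meas l_meas])
  also have "\<dots> = density m (\<lambda>y. ennreal (g (Suc t) y))"
  proof -
    have "0 \<le> g t y" for y
      using Z_pos unfolding g_def by (intro divide_nonneg_pos prod_pos) auto
    then have "ennreal (g t y) * ennreal (exp (- \<beta> * l (Suc t) y) / Z (Suc t)) = ennreal (g (Suc t) y)" for y
      unfolding g_Suc using Z_pos[of "Suc t"] by (intro ennreal_mult[symmetric]) auto
    then show ?thesis
      by simp
  qed
  finally show ?case by (simp add: g_def Z_def)
qed

lemma expconcave_le_at_barycenter:
  fixes \<mu> :: "'a::metric_space measure"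
  assumes "A2 TYPE('a)" "P2 \<mu>" "barycenter \<mu> x" "geod_expconcave \<beta> f" "\<beta> > 0"
    and "integrable \<mu> (\<lambda>y. exp (- \<beta> * f y))" "(\<integral>y. exp (- \<beta> * f y) \<partial>\<mu>) > 0"
  shows "f x \<le> - ln (\<integral>y. exp (- \<beta> * f y) \<partial>\<mu>) / \<beta>"
proof -
  have "geod_convex (\<lambda>y. - exp (- \<beta> * f y))"
    using assms(4) unfolding geod_expconcave_def geod_concave_def by simp
  then have "- exp (- \<beta> * f x) \<le> (\<integral>y. - exp (- \<beta> * f y) \<partial>\<mu>)"
    using assms(1-3) integrable_minus[OF assms(6)] unfolding A2_def by blast
  then have "ln (\<integral>y. exp (- \<beta> * f y) \<partial>\<mu>) \<le> ln (exp (- \<beta> * f x))"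
    using assms(7) by (subst ln_le_cancel_iff) auto
  then show ?thesis
    using assms(5) by (simp add: field_simps)
qed

lemma prob_space_density_lower_bound:
  assumes "prob_space (density M (\<lambda>y. ennreal (f y)))" "finite_measure M"
    and "f \<in> borel_measurable M" "B \<in> sets M" "0 \<le> K" "\<And>y. y \<in> B \<Longrightarrow> K \<le> f y"
  shows "K * measure M B \<le> 1"
proof -
  have "ennreal (K * measure M B) = ennreal K * emeasure M B"
    using assms(5) by (simp add: finite_measure.emeasure_eq_measure[OF assms(2)] ennreal_mult)
  also have "\<dots> = (\<integral>\<^sup>+ y. ennreal K * indicator B y \<partial>M)"
    using assms(4) by (simp add: nn_integral_cmult_indicator)
  also have "\<dots> \<le> (\<integral>\<^sup>+ y. ennreal (f y) \<partial>M)"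
  proof (rule nn_integral_mono)
    show "ennreal K * indicator B y \<le> ennreal (f y)" for y
      using assms(6)[of y] by (cases "y \<in> B") (simp_all add: ennreal_leI)
  qed
  also have "\<dots> = emeasure (density M (\<lambda>y. ennreal (f y))) (space M)"
    using assms(3) by (subst emeasure_density) (auto intro!: nn_integral_cong)
  also have "\<dots> = 1"
    using prob_space.emeasure_space_1[OF assms(1)] by simp
  finally show ?thesis
    by (simp add: ennreal_le_1)
qed

lemma sum_lipschitz_le_at_distance:
  fixes l :: "'b \<Rightarrow> 'a::metric_space \<Rightarrow> real" and L r :: real
  assumes "\<And>t. t \<in> T \<Longrightarrow> L-lipschitz_on UNIV (l t)" "0 \<le> L" "dist y z \<le> r"
  shows "(\<Sum>t\<in>T. l t y) \<le> (\<Sum>t\<in>T. l t z) + card T * (L * r)"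
proof -
  have "l t y \<le> l t z + L * r" if "t \<in> T" for t
  proof -
    have "dist (l t y) (l t z) \<le> L * dist y z"
      using assms(1)[OF that] by (rule lipschitz_onD) auto
    also have "\<dots> \<le> L * r"
      using assms(2,3) by (rule mult_left_mono[rotated])
    finally show ?thesis
      by (simp add: dist_real_def)
  qed
  then have "(\<Sum>t\<in>T. l t y) \<le> (\<Sum>t\<in>T. l t z + L * r)"
    by (rule sum_mono)
  then show ?thesis
    by (simp add: sum.distrib)
qed

lemma ewb_cumulative_loss_le:
  fixes m :: "'a::metric_space measure"
  assumes "A2 TYPE('a)" "\<beta> > 0"
    and "\<And>t. t \<in> {1..n} \<Longrightarrow> P2 (ewb m \<beta> l t)"
    and "\<And>t. t \<in> {1..n} \<Longrightarrow> barycenter (ewb m \<beta> l t) (x t)"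
    and "\<And>t. t \<in> {1..n} \<Longrightarrow> geod_expconcave \<beta> (l t)"
    and "\<And>t. t \<in> {1..n} \<Longrightarrow> integrable (ewb m \<beta> l t) (\<lambda>y. exp (- \<beta> * l t y))"
    and "\<And>t. t \<in> {1..n} \<Longrightarrow> ewb_normalizer m \<beta> l t > 0"
  shows "(\<Sum>t=1..n. l t (x t)) \<le> - ln (\<Prod>t=1..n. ewb_normalizer m \<beta> l t) / \<beta>"
proof -
  have "(\<Sum>t=1..n. l t (x t)) \<le> (\<Sum>t=1..n. - ln (ewb_normalizer m \<beta> l t) / \<beta>)"
  proof (rule sum_mono)
    show "l t (x t) \<le> - ln (ewb_normalizer m \<beta> l t) / \<beta>" if "t \<in> {1..n}" for t
      unfolding ewb_normalizer_def
      using assms that by (intro expconcave_le_at_barycenter) (auto simp: ewb_normalizer_def)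
  qed
  also have "\<dots> = - (\<Sum>t=1..n. ln (ewb_normalizer m \<beta> l t)) / \<beta>"
    by (simp add: sum_divide_distrib[symmetric] sum_negf)
  also have "(\<Sum>t=1..n. ln (ewb_normalizer m \<beta> l t)) = ln (\<Prod>t=1..n. ewb_normalizer m \<beta> l t)"
    using assms(7) by (subst ln_prod) force+
  finally show ?thesis .
qed

lemma ewb_normalizer_prod_ge:
  fixes m :: "'a::metric_space measure"
  assumes "sets m = sets borel" "finite_measure m" "0 \<le> \<beta>" "0 \<le> L"
    and "\<And>t. t \<in> {1..n} \<Longrightarrow> l t \<in> borel_measurable m"
    and "\<And>t. t \<in> {1..n} \<Longrightarrow> ewb_normalizer m \<beta> l t > 0"
    and "\<And>t. t \<in> {1..n} \<Longrightarrow> L-lipschitz_on UNIV (l t)"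
    and "prob_space (ewb m \<beta> l (Suc n))"
  shows "exp (- \<beta> * ((\<Sum>t=1..n. l t z) + n * (L * r))) * measure m (ball z r)
           \<le> (\<Prod>t=1..n. ewb_normalizer m \<beta> l t)"
proof -
  define P where "P = (\<Prod>t=1..n. ewb_normalizer m \<beta> l t)"
  define S where "S y = (\<Sum>t=1..n. l t y)" for y
  define E where "E = exp (- \<beta> * (S z + n * (L * r)))"
  have P_pos: "P > 0"
    unfolding P_def using assms(6) by (intro prod_pos) auto
  have "prob_space (density m (\<lambda>y. ennreal (exp (- \<beta> * S y) / P)))"
    using assms(8) ewb_eq_density[of n l m \<beta>] assms(5,6) by (simp add: S_def P_def)
  then have "(E / P) * measure m (ball z r) \<le> 1"
  proof (rule prob_space_density_lower_bound)
    show "(\<lambda>y. exp (- \<beta> * S y) / P) \<in> borel_measurable m"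
      unfolding S_def using assms(5) by measurable
    show "E / P \<le> exp (- \<beta> * S y) / P" if "y \<in> ball z r" for y
    proof -
      have "S y \<le> S z + card {1..n} * (L * r)"
        unfolding S_def using assms(4,7) that
        by (intro sum_lipschitz_le_at_distance) (auto simp: dist_commute)
      then show ?thesis
        unfolding E_def using assms(3) P_pos by (intro divide_right_mono) (auto simp: mult_left_mono)
    qed
  qed (use assms(1,2) P_pos in \<open>auto simp: E_def\<close>)
  then show ?thesis
    using P_pos by (simp add: E_def S_def P_def divide_le_eq mult.commute times_divide_eq_left)
qed

theorem mainTheorem4:
  fixes m :: "'a::polish_space measure"
    and p r0 \<beta> L :: real
    and c :: "'a \<Rightarrow> real"
    and l :: "nat \<Rightarrow> 'a \<Rightarrow> real"
    and x :: "nat \<Rightarrow> 'a"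
    and n :: nat
    and xstar :: 'a
  assumes geod: "geodesic_space TYPE('a)"
    and A1: "A1 TYPE('a)" and A2: "A2 TYPE('a)"
    and m: "P2 m"
    and p: "p > 0" and r0: "r0 > 0"
    and c_pos: "\<forall>y. c y > 0"
    and ball: "\<forall>y. \<forall>r\<in>{0<..r0}. measure m (ball y r) > c y * r powr p"
    and \<beta>: "\<beta> > 0" and L: "L > 0"
    and meas: "\<forall>t\<ge>1. l t \<in> borel_measurable borel"
    and expc: "\<forall>t\<ge>1. geod_expconcave \<beta> (l t)"
    and lip: "\<forall>t\<ge>1. L-lipschitz_on UNIV (l t)"
    and wd_int: "\<forall>t\<ge>1. integrable (ewb m \<beta> l t) (\<lambda>y. exp (- \<beta> * l t y))
                       \<and> (\<integral>y. exp (- \<beta> * l t y) \<partial>(ewb m \<beta> l t)) > 0"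
    and wd_P2: "\<forall>t\<ge>1. P2 (ewb m \<beta> l t)"
    and xt: "\<forall>t\<in>{1..n}. barycenter (ewb m \<beta> l t) (x t)"
    and n: "n \<ge> 1" and n_r0: "real n \<ge> 1 / r0"
    and xstar: "\<forall>z. (\<Sum>t=1..n. l t xstar) \<le> (\<Sum>t=1..n. l t z)"
  shows "(\<Sum>t=1..n. l t (x t)) - (\<Sum>t=1..n. l t xstar)
           \<le> L + (1 / \<beta>) * ln (1 / c xstar) + p * ln (real n) / \<beta>"
proof -
  define P where "P = (\<Prod>t=1..n. ewb_normalizer m \<beta> l t)"
  define S where "S = (\<Sum>t=1..n. l t xstar)"
  have Z_pos: "ewb_normalizer m \<beta> l t > 0" if "t \<ge> 1" for t
    using wd_int that by (simp add: ewb_normalizer_def)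
  have sets_m: "sets m = sets borel" and prob_m: "prob_space m"
    using m by (auto simp: P2_def)
  have c_xstar: "0 < c xstar"
    using c_pos by simp
  have regret_le_mix: "(\<Sum>t=1..n. l t (x t)) \<le> - ln P / \<beta>"
    unfolding P_def using A2 \<beta> wd_P2 xt expc wd_int Z_pos
    by (intro ewb_cumulative_loss_le) auto
  have "exp (- \<beta> * (S + n * (L * (1 / n)))) * measure m (ball xstar (1 / n)) \<le> P"
    unfolding S_def P_def
  proof (rule ewb_normalizer_prod_ge)
    show "l t \<in> borel_measurable m" if "t \<in> {1..n}" for t
      using meas that measurable_cong_sets[OF sets_m refl] by auto
    show "prob_space (ewb m \<beta> l (Suc n))"
      using wd_P2[rule_format, of "Suc n"] by (simp only: P2_def)
  qed (use sets_m prob_m \<beta> L Z_pos lip in \<open>auto intro: prob_space.finite_measure\<close>)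
  moreover have "c xstar * (1 / n) powr p \<le> measure m (ball xstar (1 / n))"
    using ball n n_r0 r0 by (auto simp: field_simps less_imp_le)
  ultimately have "exp (- \<beta> * (S + L)) * (c xstar * (1 / n) powr p) \<le> P"
    using n by simp (meson exp_ge_zero mult_left_mono order_trans)
  then have "ln (exp (- \<beta> * (S + L)) * (c xstar * (1 / n) powr p)) \<le> ln P"
    using c_xstar n by (intro ln_mono) auto
  then have "- \<beta> * (S + L) + ln (c xstar) - p * ln n \<le> ln P"
    using c_xstar n by (simp add: ln_mult ln_powr ln_div)
  then have "- ln P / \<beta> \<le> S + L + (1 / \<beta>) * ln (1 / c xstar) + p * ln n / \<beta>"
    using \<beta> ln_div[of 1 "c xstar"] c_xstar by (simp add: field_simps)
  then show ?thesis
    using regret_le_mix unfolding S_def by linarith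
qed

end
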